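(* Assume the following setting. Let $(E,\mathcal{E},\mu)$ be a non-atomic $\sigma$-finite measure space with $\mu(E)=\infty$. Let $(a_n)_{n\ge1}$ be positive numbers with $a_n\to\infty$ and $a_n=o(n)$. For each $n$ let $P_n$ be a probability measure on $(E,\mathcal{E})$ such that $\mu_n:=(n/a_n)P_n$ satisfies $\mu_n(B)\le\mu_{n+1}(B)$ and $\mu_n(B)\to\mu(B)$ for every $B\in\mathcal{E}$. Let $k_1,k_2\in\mathbb{N}_+$, $f\in L^2(\mu^{k_1})$, $g\in L^2(\mu^{k_2})$, and suppose either (i) $k_1\ne k_2$ and $0\le l\le\min\{k_1,k_2\}$, or (ii) $k_1=k_2$ and $0\le l<k_1$. Then $F_l^{(n)}(f,g)\to0$ as $n\to\infty$.
   Context: Write $f\otimes g(x_1,\dots,x_{k_1+k_2})=f(x_1,\dots,x_{k_1})g(x_{k_1+1},\dots,x_{k_1+k_2})$. A diagram with $l$ edges is an edge set $\mathcal{N}=\{(j_1,j_1'),\dots,(j_l,j_l')\}$ with $1\le j_s\le k_1$, $k_1+1\le j_s'\le k_1+k_2$, the $j_s$ pairwise distinct and the $j_s'$ pairwise distinct; let $\mathcal{B}(l)$ be the set of all such diagrams, so $|\mathcal{B}(l)|=\frac{k_1!k_2!}{(k_1-l)!(k_2-l)!l!}$. For $\mathcal{N}\in\mathcal{B}(l)$, $(f\otimes g)_{\mathcal{N}}$ is the function of $k_1+k_2-l$ variables obtained from $f\otimes g$ by setting $x_{j_s}=x_{j_s'}$ for $s=1,\dots,l$ (for $l=0$ it is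 $f\otimes g$). Define $$F_l^{(n)}(f,g)=\Big(\frac{n}{a_n}\Big)^{(k_1+k_2)/2}\int_{E^{k_1+k_2-l}}\frac1{|\mathcal{B}(l)|}\sum_{\mathcal{N}\in\mathcal{B}(l)}(f\otimes g)_{\mathcal{N}}\,dP_n^{k_1+k_2-l}.$$ $\mu^k$, $P_n^k$ denote $k$-fold product measures. *)

theory Defs
  imports "HOL-Probability.Probability"
begin

definition non_atomic :: "'a measure \<Rightarrow> bool" where
  "non_atomic M \<longleftrightarrow> (\<forall>A\<in>sets M. 0 < emeasure M A \<longrightarrow>
      (\<exists>B\<in>sets M. B \<subseteq> A \<and> 0 < emeasure M B \<and> emeasure M B < emeasure M A))"

text \<open>Coordinates are 0-indexed: x_1..x_{k1+k2} become x 0 .. x (k1+k2-1).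
  Functions of k variables are functions on the product space PiM {..<k}.\<close>

definition tensor :: "nat \<Rightarrow> nat \<Rightarrow> ((nat \<Rightarrow> 'a) \<Rightarrow> real) \<Rightarrow> ((nat \<Rightarrow> 'a) \<Rightarrow> real)
    \<Rightarrow> (nat \<Rightarrow> 'a) \<Rightarrow> real" where
  "tensor k1 k2 f g x = f (restrict x {..<k1}) * g (restrict (\<lambda>i. x (k1 + i)) {..<k2})"

definition diagrams :: "nat \<Rightarrow> nat \<Rightarrow> nat \<Rightarrow> (nat \<times> nat) set set" where
  "diagrams k1 k2 l = {N. N \<subseteq> {..<k1} \<times> {k1..<k1+k2} \<and> card N = l
      \<and> inj_on fst N \<and> inj_on snd N}"

text \<open>Remaining variables after identification: all indices except the second endpoints.\<close>
definition kept :: "nat \<Rightarrow> nat \<Rightarrow> (nat \<times> nat) set \<Rightarrow> nat set" where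
  "kept k1 k2 N = {..<k1+k2} - snd ` N"

definition rep :: "(nat \<times> nat) set \<Rightarrow> nat \<Rightarrow> nat" where
  "rep N i = (if i \<in> snd ` N then (THE j. (j, i) \<in> N) else i)"

text \<open>Contraction (f \<otimes> g)_N, a function of k1+k2-l variables: the kept variables are
  relabelled in increasing order by their rank in the set of kept indices.\<close>
definition contraction :: "nat \<Rightarrow> nat \<Rightarrow> (nat \<times> nat) set \<Rightarrow> ((nat \<Rightarrow> 'a) \<Rightarrow> real)
    \<Rightarrow> (nat \<Rightarrow> 'a) \<Rightarrow> real" where
  "contraction k1 k2 N h z =
     h (\<lambda>i\<in>{..<k1+k2}. z (card {m \<in> kept k1 k2 N. m < rep N i}))"

definition F_ln :: "nat \<Rightarrow> nat \<Rightarrow> ((nat \<Rightarrow> 'a) \<Rightarrow> real) \<Rightarrow> ((nat \<Rightarrow> 'a) \<Rightarrow> real)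
    \<Rightarrow> (nat \<Rightarrow> 'a measure) \<Rightarrow> (nat \<Rightarrow> real) \<Rightarrow> nat \<Rightarrow> nat \<Rightarrow> real" where
  "F_ln k1 k2 f g P a l n =
     (real n / a n) powr (real (k1 + k2) / 2) *
     integral\<^sup>L (PiM {..<k1 + k2 - l} (\<lambda>_. P n))
       (\<lambda>z. (1 / real (card (diagrams k1 k2 l))) *
             (\<Sum>N\<in>diagrams k1 k2 l. contraction k1 k2 N (tensor k1 k2 f g) z))"

end

theory Submission
  imports Defs
begin

(* With c n = n / a n, the measures c n * P n increase to M, so c n * P n <= M and therefore
   c n ^ k * P n ^ k <= M ^ k on k-fold products.  Under a diagram N, (f tensor g)_N becomes
   z |-> f (z o sigma) * g (z o tau), where sigma and tau are injective and together cover the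
   K = k1 + k2 - l remaining coordinates; the hypothesis on l says exactly 2 K > k1 + k2.
   Split f and g into parts f1, g1 bounded by C and supported in a box B ^ k with M B < infinity,
   plus remainders that are small in L2.  The part f1 g1 contributes at most
   C^2 * c n ^ ((k1 + k2) / 2) * P n B ^ K <= C^2 * M B ^ K * c n ^ ((k1 + k2) / 2 - K) -> 0,
   and by Cauchy-Schwarz the other parts contribute at most ||f - f1|| ||g|| + ||f1|| ||g - g1||,
   uniformly in n. *)

lemma powr_half_square: "0 < c \<Longrightarrow> (c powr (real n / 2))\<^sup>2 = c ^ n"
  by (simp add: power2_eq_square powr_add[symmetric] powr_realpow)

lemma ennreal_le_of_power2_le:
  assumes "x\<^sup>2 \<le> ennreal (r\<^sup>2)" "0 \<le> r"
  shows "x \<le> ennreal r"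
proof (cases x)
  case (real y)
  with assms(1) have "ennreal (y\<^sup>2) \<le> ennreal (r\<^sup>2)"
    by (simp only: ennreal_power)
  then have "y\<^sup>2 \<le> r\<^sup>2"
    using ennreal_le_iff[of "r\<^sup>2" "y\<^sup>2"] by simp
  with assms(2) real show ?thesis
    by (simp only: ennreal_leI power2_le_imp_le)
next
  case top
  with assms(1) show ?thesis
    by (simp add: power_eq_top_ennreal top_unique)
qed

lemma ennreal_abs_mult_le_truncated:
  fixes a a1 b b1 :: real
  shows "ennreal \<bar>a * b\<bar> \<le> ennreal \<bar>a1 * b1\<bar> + ennreal \<bar>(a - a1) * b\<bar> + ennreal \<bar>a1 * (b - b1)\<bar>"
proof -
  have "a * b = a1 * b1 + (a - a1) * b + a1 * (b - b1)"
    by (simp add: algebra_simps)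
  then have "\<bar>a * b\<bar> \<le> \<bar>a1 * b1\<bar> + \<bar>(a - a1) * b\<bar> + \<bar>a1 * (b - b1)\<bar>"
    using abs_triangle_ineq[of "a1 * b1 + (a - a1) * b" "a1 * (b - b1)"]
      abs_triangle_ineq[of "a1 * b1" "(a - a1) * b"] by linarith
  from ennreal_leI[OF this] show ?thesis
    by simp
qed

lemma ennreal_abs_integral_sum_le:
  assumes "finite S" "\<bar>a\<bar> \<le> 1" "\<And>N. N \<in> S \<Longrightarrow> h N \<in> borel_measurable Q"
  shows "ennreal \<bar>\<integral>z. a * (\<Sum>N\<in>S. h N z) \<partial>Q\<bar> \<le> (\<Sum>N\<in>S. \<integral>\<^sup>+z. ennreal \<bar>h N z\<bar> \<partial>Q)"
proof -
  have "ennreal \<bar>\<integral>z. a * (\<Sum>N\<in>S. h N z) \<partial>Q\<bar> \<le> (\<integral>\<^sup>+z. ennreal \<bar>a * (\<Sum>N\<in>S. h N z)\<bar> \<partial>Q)"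
    using integral_norm_bound_ennreal[of Q "\<lambda>z. a * (\<Sum>N\<in>S. h N z)"]
    by (cases "integrable Q (\<lambda>z. a * (\<Sum>N\<in>S. h N z))") (simp_all add: not_integrable_integral_eq)
  also have "\<dots> \<le> (\<integral>\<^sup>+z. (\<Sum>N\<in>S. ennreal \<bar>h N z\<bar>) \<partial>Q)"
  proof (intro nn_integral_mono)
    fix z
    have le: "\<bar>a * (\<Sum>N\<in>S. h N z)\<bar> \<le> (\<Sum>N\<in>S. \<bar>h N z\<bar>)"
      unfolding abs_mult using assms(2) sum_abs[of "\<lambda>N. h N z" S]
      by (metis abs_ge_zero mult_left_le_one_le order_trans)
    show "ennreal \<bar>a * (\<Sum>N\<in>S. h N z)\<bar> \<le> (\<Sum>N\<in>S. ennreal \<bar>h N z\<bar>)"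
      using ennreal_leI[OF le] by (simp add: sum_ennreal)
  qed
  also have "\<dots> = (\<Sum>N\<in>S. \<integral>\<^sup>+z. ennreal \<bar>h N z\<bar> \<partial>Q)"
    using assms(3) by (intro nn_integral_sum) auto
  finally show ?thesis .
qed

lemma le_of_tendsto_mono_from:
  fixes X :: "nat \<Rightarrow> 'a::linorder_topology"
  assumes "\<And>m. n \<le> m \<Longrightarrow> X m \<le> X (Suc m)" and "X \<longlonglongrightarrow> L"
  shows "X n \<le> L"
proof (rule LIMSEQ_le_const[OF assms(2)])
  have "X n \<le> X m" if "n \<le> m" for m
    using that by (induction m rule: dec_induct) (auto intro: order_trans assms(1))
  then show "\<exists>N. \<forall>m\<ge>N. X n \<le> X m"
    by blast
qed

section \<open>Products of dominated measures\<close>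

lemma sets_PiM_const_cong:
  assumes "sets P = sets M"
  shows "sets (PiM I (\<lambda>_. P)) = sets (PiM I (\<lambda>_. M))"
  by (rule sets_PiM_cong) (auto simp: assms)

lemma measurable_PiM_cong_sets:
  assumes "sets P = sets M"
  shows "measurable (PiM I (\<lambda>_. P)) N = measurable (PiM I (\<lambda>_. M)) N"
  by (intro measurable_cong_sets sets_PiM_const_cong assms refl)

lemma nn_integral_PiM_mono_measure:
  assumes I: "finite I" and sfN: "sigma_finite_measure N" and sfM: "sigma_finite_measure M"
    and sets: "sets N = sets M" and le: "\<And>A. A \<in> sets M \<Longrightarrow> emeasure N A \<le> emeasure M A"
    and h: "h \<in> borel_measurable (PiM I (\<lambda>_. M))"
  shows "(\<integral>\<^sup>+x. h x \<partial>PiM I (\<lambda>_. N)) \<le> (\<integral>\<^sup>+x. h x \<partial>PiM I (\<lambda>_. M))"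
  using I h
proof (induct I arbitrary: h rule: finite_induct)
  case empty
  then show ?case by (simp add: PiM_empty)
next
  case (insert i I)
  interpret N: product_sigma_finite "\<lambda>_. N" by (simp add: product_sigma_finite_def sfN)
  interpret M: product_sigma_finite "\<lambda>_. M" by (simp add: product_sigma_finite_def sfM)
  have "N \<le> M"
    using sets sets_eq_imp_space_eq[OF sets] le
    by (auto simp: le_measure_iff le_fun_def) (metis emeasure_notin_sets order_refl)
  have [measurable]: "h \<in> borel_measurable (PiM (insert i I) (\<lambda>_. M))" by fact
  then have "h \<in> borel_measurable (PiM (insert i I) (\<lambda>_. N))"
    by (simp add: measurable_PiM_cong_sets[OF sets])
  then have "(\<integral>\<^sup>+x. h x \<partial>PiM (insert i I) (\<lambda>_. N))
      = (\<integral>\<^sup>+x. (\<integral>\<^sup>+y. h (x(i := y)) \<partial>N) \<partial>PiM I (\<lambda>_. N))"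
    using insert by (simp add: N.product_nn_integral_insert)
  also have "\<dots> \<le> (\<integral>\<^sup>+x. (\<integral>\<^sup>+y. h (x(i := y)) \<partial>M) \<partial>PiM I (\<lambda>_. N))"
    by (intro nn_integral_mono nn_integral_mono_measure sets \<open>N \<le> M\<close>)
  also have "\<dots> \<le> (\<integral>\<^sup>+x. (\<integral>\<^sup>+y. h (x(i := y)) \<partial>M) \<partial>PiM I (\<lambda>_. M))"
    using insert by (intro insert.hyps(3)) measurable
  also have "\<dots> = (\<integral>\<^sup>+x. h x \<partial>PiM (insert i I) (\<lambda>_. M))"
    using insert by (simp add: M.product_nn_integral_insert)
  finally show ?case .
qed

lemma PiM_scale_measure:
  assumes I: "finite I" and P: "finite_measure P" and c: "c \<ge> 0"
  shows "PiM I (\<lambda>_. scale_measure (ennreal c) P) = scale_measure (ennreal (c ^ card I)) (PiM I (\<lambda>_. P))"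
proof -
  interpret P: finite_measure P by fact
  have "finite_measure (scale_measure (ennreal c) P)"
    by (rule finite_measureI) (simp add: space_scale_measure ennreal_mult_eq_top_iff)
  then interpret cP: product_sigma_finite "\<lambda>_. scale_measure (ennreal c) P"
    by (simp add: product_sigma_finite_def finite_measure.sigma_finite_measure)
  interpret PP: product_sigma_finite "\<lambda>_. P"
    by (simp add: product_sigma_finite_def P.sigma_finite_measure)
  show ?thesis
  proof (rule cP.PiM_eqI[symmetric, OF I])
    show "sets (scale_measure (ennreal (c ^ card I)) (PiM I (\<lambda>_. P)))
        = sets (PiM I (\<lambda>_. scale_measure (ennreal c) P))"
      by (simp cong: sets_PiM_cong)
    fix A assume "\<And>i. i \<in> I \<Longrightarrow> A i \<in> sets (scale_measure (ennreal c) P)"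
    with I c show "emeasure (scale_measure (ennreal (c ^ card I)) (PiM I (\<lambda>_. P))) (Pi\<^sub>E I A)
        = (\<Prod>i\<in>I. emeasure (scale_measure (ennreal c) P) (A i))"
      by (simp add: PP.emeasure_PiM prod.distrib ennreal_power)
  qed
qed

definition reindex :: "('i \<Rightarrow> 'j) \<Rightarrow> 'i set \<Rightarrow> ('j \<Rightarrow> 'a) \<Rightarrow> 'i \<Rightarrow> 'a" where
  "reindex \<tau> I z = (\<lambda>i\<in>I. z (\<tau> i))"

lemma measurable_reindex:
  assumes "\<tau> ` I \<subseteq> K"
  shows "reindex \<tau> I \<in> measurable (PiM K (\<lambda>_. P)) (PiM I (\<lambda>_. P))"
  unfolding reindex_def
  by (rule measurable_restrict) (use assms in \<open>auto intro!: measurable_component_singleton\<close>)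

lemma nn_integral_PiM_reindex:
  assumes "prob_space P" and "inj_on \<tau> I" and "\<tau> ` I \<subseteq> K"
    and h: "h \<in> borel_measurable (PiM I (\<lambda>_. P))"
  shows "(\<integral>\<^sup>+z. h (reindex \<tau> I z) \<partial>PiM K (\<lambda>_. P)) = (\<integral>\<^sup>+x. h x \<partial>PiM I (\<lambda>_. P))"
proof -
  have distr: "distr (PiM K (\<lambda>_. P)) (PiM I (\<lambda>_. P)) (reindex \<tau> I) = PiM I (\<lambda>_. P)"
    using distr_PiM_reindex[of K "\<lambda>_. P" \<tau> I] assms
    by (simp add: reindex_def[abs_def] image_subset_iff_funcset)
  show ?thesis
    using nn_integral_distr[OF measurable_reindex[OF assms(3), of P], of h] h by (simp add: distr)
qed

lemma pair_nn_integral_box_le: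
  assumes "prob_space P" "finite K" "B \<in> sets P"
    and "\<And>x. \<bar>\<phi> x\<bar> \<le> C" "\<And>x. \<bar>\<psi> x\<bar> \<le> C"
    and "\<And>x i. i \<in> I \<Longrightarrow> x i \<notin> B \<Longrightarrow> \<phi> x = 0"
    and "\<And>x i. i \<in> J \<Longrightarrow> x i \<notin> B \<Longrightarrow> \<psi> x = 0"
    and "K \<subseteq> \<sigma> ` I \<union> \<tau> ` J"
  shows "(\<integral>\<^sup>+z. ennreal \<bar>\<phi> (reindex \<sigma> I z) * \<psi> (reindex \<tau> J z)\<bar> \<partial>PiM K (\<lambda>_. P))
    \<le> ennreal (C\<^sup>2) * emeasure P B ^ card K"
proof -
  interpret product_sigma_finite "\<lambda>_. P"
    using assms(1) by (simp add: product_sigma_finite_def prob_space_imp_sigma_finite)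
  have "ennreal \<bar>\<phi> (reindex \<sigma> I z) * \<psi> (reindex \<tau> J z)\<bar> \<le> ennreal (C\<^sup>2) * indicator (PiE K (\<lambda>_. B)) z"
    if "z \<in> space (PiM K (\<lambda>_. P))" for z
  proof (cases "z \<in> PiE K (\<lambda>_. B)")
    case True
    have "\<bar>\<phi> (reindex \<sigma> I z) * \<psi> (reindex \<tau> J z)\<bar> \<le> C * C"
      unfolding abs_mult by (intro mult_mono assms(4,5) abs_ge_zero order_trans[OF abs_ge_zero assms(4)])
    with True show ?thesis
      by (simp add: power2_eq_square ennreal_leI)
  next
    case False
    with that obtain j where "j \<in> K" "z j \<notin> B"
      by (auto simp: space_PiM PiE_def Pi_def)
    with assms(8) have "\<phi> (reindex \<sigma> I z) = 0 \<or> \<psi> (reindex \<tau> J z) = 0"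
      using assms(6,7) unfolding reindex_def by fastforce
    then show ?thesis
      by auto
  qed
  then have "(\<integral>\<^sup>+z. ennreal \<bar>\<phi> (reindex \<sigma> I z) * \<psi> (reindex \<tau> J z)\<bar> \<partial>PiM K (\<lambda>_. P))
      \<le> (\<integral>\<^sup>+z. ennreal (C\<^sup>2) * indicator (PiE K (\<lambda>_. B)) z \<partial>PiM K (\<lambda>_. P))"
    by (intro nn_integral_mono)
  also have "\<dots> = ennreal (C\<^sup>2) * emeasure P B ^ card K"
    using assms(2,3) by (simp add: nn_integral_cmult_indicator sets_PiM_I_finite emeasure_PiM)
  finally show ?thesis .
qed

locale dominated_prob_space = prob_space P + M: sigma_finite_measure M
  for P M :: "'a measure" +
  fixes c :: real
  assumes sets_eq: "sets P = sets M"
    and c_pos: "0 < c"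
    and dominated: "A \<in> sets M \<Longrightarrow> ennreal c * emeasure P A \<le> emeasure M A"
begin

lemma measurable_reindex_M:
  assumes "\<tau> ` I \<subseteq> K"
  shows "reindex \<tau> I \<in> measurable (PiM K (\<lambda>_. P)) (PiM I (\<lambda>_. M))"
  using measurable_reindex[OF assms, of P]
  by (simp add: measurable_cong_sets[OF refl sets_PiM_const_cong[OF sets_eq]])

lemma nn_integral_PiM_le:
  assumes "finite I" and "h \<in> borel_measurable (PiM I (\<lambda>_. M))"
  shows "ennreal (c ^ card I) * (\<integral>\<^sup>+x. h x \<partial>PiM I (\<lambda>_. P)) \<le> (\<integral>\<^sup>+x. h x \<partial>PiM I (\<lambda>_. M))"
proof -
  have "finite_measure (scale_measure (ennreal c) P)"
    by (rule finite_measureI) (simp add: space_scale_measure ennreal_mult_eq_top_iff)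
  then have "(\<integral>\<^sup>+x. h x \<partial>PiM I (\<lambda>_. scale_measure (ennreal c) P)) \<le> (\<integral>\<^sup>+x. h x \<partial>PiM I (\<lambda>_. M))"
    using assms sets_eq dominated M.sigma_finite_measure_axioms
    by (intro nn_integral_PiM_mono_measure) (auto intro: finite_measure.sigma_finite_measure)
  moreover have "h \<in> borel_measurable (PiM I (\<lambda>_. P))"
    using assms(2) by (simp add: measurable_PiM_cong_sets[OF sets_eq])
  ultimately show ?thesis
    using assms(1) c_pos finite_measure_axioms
    by (simp add: PiM_scale_measure nn_integral_scale_measure)
qed

lemma nn_integral_reindex_le:
  assumes "finite I" and "inj_on \<tau> I" and "\<tau> ` I \<subseteq> K"
    and h: "h \<in> borel_measurable (PiM I (\<lambda>_. M))"
  shows "ennreal (c ^ card I) * (\<integral>\<^sup>+z. h (reindex \<tau> I z) \<partial>PiM K (\<lambda>_. P))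
      \<le> (\<integral>\<^sup>+x. h x \<partial>PiM I (\<lambda>_. M))"
  using assms nn_integral_PiM_le[OF assms(1) h] prob_space_axioms
  by (simp add: nn_integral_PiM_reindex measurable_PiM_cong_sets[OF sets_eq])

lemma pair_nn_integral_Cauchy_Schwarz:
  assumes "finite I" "inj_on \<sigma> I" "\<sigma> ` I \<subseteq> K"
    and "finite J" "inj_on \<tau> J" "\<tau> ` J \<subseteq> K"
    and \<phi>[measurable]: "\<phi> \<in> borel_measurable (PiM I (\<lambda>_. M))"
    and \<psi>[measurable]: "\<psi> \<in> borel_measurable (PiM J (\<lambda>_. M))"
  shows "(ennreal (c powr ((card I + card J) / 2)) *
      (\<integral>\<^sup>+z. ennreal \<bar>\<phi> (reindex \<sigma> I z) * \<psi> (reindex \<tau> J z)\<bar> \<partial>PiM K (\<lambda>_. P)))\<^sup>2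
    \<le> (\<integral>\<^sup>+x. ennreal ((\<phi> x)\<^sup>2) \<partial>PiM I (\<lambda>_. M)) * (\<integral>\<^sup>+x. ennreal ((\<psi> x)\<^sup>2) \<partial>PiM J (\<lambda>_. M))"
proof -
  let ?Q = "PiM K (\<lambda>_. P)"
  define u where "u z = ennreal (c powr (card I / 2) * \<bar>\<phi> (reindex \<sigma> I z)\<bar>)" for z
  define v where "v z = ennreal (c powr (card J / 2) * \<bar>\<psi> (reindex \<tau> J z)\<bar>)" for z
  note measurable_reindex_M[OF assms(3), measurable] measurable_reindex_M[OF assms(6), measurable]
  have "u z * v z = ennreal (c powr ((card I + card J) / 2)) *
      ennreal \<bar>\<phi> (reindex \<sigma> I z) * \<psi> (reindex \<tau> J z)\<bar>" for z
    unfolding u_def v_def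
    by (simp add: ennreal_mult[symmetric] abs_mult add_divide_distrib powr_add mult_ac)
  then have "(ennreal (c powr ((card I + card J) / 2)) *
      (\<integral>\<^sup>+z. ennreal \<bar>\<phi> (reindex \<sigma> I z) * \<psi> (reindex \<tau> J z)\<bar> \<partial>?Q))\<^sup>2
      = (\<integral>\<^sup>+z. u z * v z \<partial>?Q)\<^sup>2"
    by (simp add: nn_integral_cmult)
  also have "\<dots> \<le> (\<integral>\<^sup>+z. u z ^ 2 \<partial>?Q) * (\<integral>\<^sup>+z. v z ^ 2 \<partial>?Q)"
    by (rule Cauchy_Schwarz_nn_integral) (simp_all add: u_def v_def)
  also have "\<dots> \<le> (\<integral>\<^sup>+x. ennreal ((\<phi> x)\<^sup>2) \<partial>PiM I (\<lambda>_. M)) * (\<integral>\<^sup>+x. ennreal ((\<psi> x)\<^sup>2) \<partial>PiM J (\<lambda>_. M))"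
  proof (intro mult_mono zero_le)
    have square: "(ennreal (c powr (real n / 2) * \<bar>x\<bar>))\<^sup>2 = ennreal (c ^ n) * ennreal (x\<^sup>2)" for n x
      using c_pos by (simp add: ennreal_power ennreal_mult[symmetric] power_mult_distrib powr_half_square)
    show "(\<integral>\<^sup>+z. u z ^ 2 \<partial>?Q) \<le> (\<integral>\<^sup>+x. ennreal ((\<phi> x)\<^sup>2) \<partial>PiM I (\<lambda>_. M))"
      using nn_integral_reindex_le[OF assms(1-3), of "\<lambda>x. ennreal ((\<phi> x)\<^sup>2)"]
      by (simp add: u_def square nn_integral_cmult)
    show "(\<integral>\<^sup>+z. v z ^ 2 \<partial>?Q) \<le> (\<integral>\<^sup>+x. ennreal ((\<psi> x)\<^sup>2) \<partial>PiM J (\<lambda>_. M))"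
      using nn_integral_reindex_le[OF assms(4-6), of "\<lambda>x. ennreal ((\<psi> x)\<^sup>2)"]
      by (simp add: v_def square nn_integral_cmult)
  qed
  finally show ?thesis .
qed

lemma pair_nn_integral_le_mult:
  assumes "finite I" "inj_on \<sigma> I" "\<sigma> ` I \<subseteq> K"
    and "finite J" "inj_on \<tau> J" "\<tau> ` J \<subseteq> K"
    and "\<phi> \<in> borel_measurable (PiM I (\<lambda>_. M))" "\<psi> \<in> borel_measurable (PiM J (\<lambda>_. M))"
    and "(\<integral>\<^sup>+x. ennreal ((\<phi> x)\<^sup>2) \<partial>PiM I (\<lambda>_. M)) \<le> ennreal (A\<^sup>2)" "0 \<le> A"
    and "(\<integral>\<^sup>+x. ennreal ((\<psi> x)\<^sup>2) \<partial>PiM J (\<lambda>_. M)) \<le> ennreal (B\<^sup>2)" "0 \<le> B"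
  shows "ennreal (c powr ((card I + card J) / 2)) *
      (\<integral>\<^sup>+z. ennreal \<bar>\<phi> (reindex \<sigma> I z) * \<psi> (reindex \<tau> J z)\<bar> \<partial>PiM K (\<lambda>_. P))
    \<le> ennreal (A * B)"
proof (rule ennreal_le_of_power2_le)
  show "(ennreal (c powr ((card I + card J) / 2)) *
      (\<integral>\<^sup>+z. ennreal \<bar>\<phi> (reindex \<sigma> I z) * \<psi> (reindex \<tau> J z)\<bar> \<partial>PiM K (\<lambda>_. P)))\<^sup>2
    \<le> ennreal ((A * B)\<^sup>2)"
    using pair_nn_integral_Cauchy_Schwarz[OF assms(1-8)] mult_mono[OF assms(9,11)] assms(10,12)
    by (simp add: power_mult_distrib ennreal_mult)
qed (use assms in simp)

lemma scaled_emeasure_power_le: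
  assumes "A \<in> sets M"
  shows "ennreal (c powr s) * emeasure P A ^ n \<le> ennreal (c powr (s - n)) * emeasure M A ^ n"
proof -
  have "c powr s = c powr (s - n) * c ^ n"
    using c_pos by (metis diff_add_cancel powr_add powr_realpow)
  then have "ennreal (c powr s) * emeasure P A ^ n = ennreal (c powr (s - n)) * (ennreal c * emeasure P A) ^ n"
    using c_pos by (simp add: power_mult_distrib ennreal_power ennreal_mult mult_ac)
  also have "\<dots> \<le> ennreal (c powr (s - n)) * emeasure M A ^ n"
    by (intro mult_left_mono power_mono_ennreal dominated assms) simp
  finally show ?thesis .
qed

end

section \<open>Truncation in \<open>L\<^sup>2\<close>\<close>

definition truncation :: "real \<Rightarrow> 'a set \<Rightarrow> 'i set \<Rightarrow> (('i \<Rightarrow> 'a) \<Rightarrow> real) \<Rightarrow> ('i \<Rightarrow> 'a) \<Rightarrow> real"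
  where "truncation C B I h x = (if \<bar>h x\<bar> \<le> C \<and> (\<forall>i\<in>I. x i \<in> B) then h x else 0)"

lemma abs_truncation_le: "0 \<le> C \<Longrightarrow> \<bar>truncation C B I h x\<bar> \<le> C"
  by (simp add: truncation_def)

lemma abs_truncation_le_abs: "\<bar>truncation C B I h x\<bar> \<le> \<bar>h x\<bar>"
  by (simp add: truncation_def)

lemma truncation_eq_0: "i \<in> I \<Longrightarrow> x i \<notin> B \<Longrightarrow> truncation C B I h x = 0"
  by (auto simp: truncation_def)

lemma measurable_truncation [measurable]:
  assumes "finite I" "B \<in> sets M" "h \<in> borel_measurable (PiM I (\<lambda>_. M))"
  shows "truncation C B I h \<in> borel_measurable (PiM I (\<lambda>_. M))"
  using assms unfolding truncation_def[abs_def] by measurable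

lemma tendsto_nn_integral_truncation_remainder:
  assumes A: "range A \<subseteq> sets M" "(\<Union>m. A m) = space M" "incseq A"
    and "finite I" and h[measurable]: "h \<in> borel_measurable (PiM I (\<lambda>_. M))"
    and h2: "integrable (PiM I (\<lambda>_. M)) (\<lambda>x. (h x)\<^sup>2)"
  shows "(\<lambda>m. \<integral>\<^sup>+x. ennreal ((h x - truncation (real m) (A m) I h x)\<^sup>2) \<partial>PiM I (\<lambda>_. M)) \<longlonglongrightarrow> 0"
proof -
  have [measurable]: "A m \<in> sets M" for m
    using A(1) by auto
  have "(\<lambda>m. \<integral>\<^sup>+x. ennreal ((h x - truncation (real m) (A m) I h x)\<^sup>2) \<partial>PiM I (\<lambda>_. M))
      \<longlonglongrightarrow> (\<integral>\<^sup>+x. 0 \<partial>PiM I (\<lambda>_. M))"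
  proof (rule nn_integral_dominated_convergence[where w = "\<lambda>x. ennreal ((h x)\<^sup>2)"])
    show "AE x in PiM I (\<lambda>_. M). ennreal ((h x - truncation (real m) (A m) I h x)\<^sup>2) \<le> ennreal ((h x)\<^sup>2)"
      for m by (simp add: truncation_def)
    show "(\<integral>\<^sup>+x. ennreal ((h x)\<^sup>2) \<partial>PiM I (\<lambda>_. M)) < \<infinity>"
      using nn_integral_eq_integral[OF h2] by simp
    show "AE x in PiM I (\<lambda>_. M). (\<lambda>m. ennreal ((h x - truncation (real m) (A m) I h x)\<^sup>2)) \<longlonglongrightarrow> 0"
    proof (rule AE_I2)
      fix x assume x: "x \<in> space (PiM I (\<lambda>_. M))"
      have "\<forall>\<^sub>F m in sequentially. x i \<in> A m" if "i \<in> I" for i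
      proof -
        from x that A(2) obtain j where "x i \<in> A j"
          by (auto simp: space_PiM)
        with A(3) show ?thesis
          unfolding eventually_sequentially incseq_def by blast
      qed
      with \<open>finite I\<close> have "\<forall>\<^sub>F m in sequentially. \<forall>i\<in>I. x i \<in> A m"
        by (simp add: eventually_ball_finite)
      moreover have "\<forall>\<^sub>F m in sequentially. \<bar>h x\<bar> \<le> real m"
        using eventually_ge_at_top[of "nat \<lceil>\<bar>h x\<bar>\<rceil>"] by eventually_elim linarith
      ultimately have "\<forall>\<^sub>F m in sequentially. truncation (real m) (A m) I h x = h x"
        by eventually_elim (simp add: truncation_def)
      then show "(\<lambda>m. ennreal ((h x - truncation (real m) (A m) I h x)\<^sup>2)) \<longlonglongrightarrow> 0"
        by (rule tendsto_eventually[OF eventually_mono]) simp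
    qed
  qed (use \<open>finite I\<close> in auto)
  then show ?thesis
    by simp
qed

lemma (in sigma_finite_measure) small_truncation_remainders:
  assumes "finite I" "finite J"
    and f: "f \<in> borel_measurable (PiM I (\<lambda>_. M))" "integrable (PiM I (\<lambda>_. M)) (\<lambda>x. (f x)\<^sup>2)"
    and g: "g \<in> borel_measurable (PiM J (\<lambda>_. M))" "integrable (PiM J (\<lambda>_. M)) (\<lambda>x. (g x)\<^sup>2)"
    and "0 < \<eta>"
  obtains C B where "0 \<le> C" "B \<in> sets M" "emeasure M B < \<infinity>"
    "(\<integral>\<^sup>+x. ennreal ((f x - truncation C B I f x)\<^sup>2) \<partial>PiM I (\<lambda>_. M)) < ennreal \<eta>"
    "(\<integral>\<^sup>+x. ennreal ((g x - truncation C B J g x)\<^sup>2) \<partial>PiM J (\<lambda>_. M)) < ennreal \<eta>"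
proof -
  obtain A where A: "range A \<subseteq> sets M" "(\<Union>i. A i) = space M" "\<And>i. emeasure M (A i) \<noteq> \<infinity>" "incseq A"
    using sigma_finite_incseq by metis
  have "\<forall>\<^sub>F m in sequentially.
      (\<integral>\<^sup>+x. ennreal ((f x - truncation (real m) (A m) I f x)\<^sup>2) \<partial>PiM I (\<lambda>_. M)) < ennreal \<eta> \<and>
      (\<integral>\<^sup>+x. ennreal ((g x - truncation (real m) (A m) J g x)\<^sup>2) \<partial>PiM J (\<lambda>_. M)) < ennreal \<eta>"
    using \<open>0 < \<eta>\<close>
    by (intro eventually_conj order_tendstoD(2)[OF tendsto_nn_integral_truncation_remainder])
      (simp_all add: A assms)
  then obtain m where
    "(\<integral>\<^sup>+x. ennreal ((f x - truncation (real m) (A m) I f x)\<^sup>2) \<partial>PiM I (\<lambda>_. M)) < ennreal \<eta>"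
    "(\<integral>\<^sup>+x. ennreal ((g x - truncation (real m) (A m) J g x)\<^sup>2) \<partial>PiM J (\<lambda>_. M)) < ennreal \<eta>"
    using eventually_happens'[OF sequentially_bot] by blast
  with A show ?thesis
    by (intro that[of "real m" "A m"]) (auto simp: less_top)
qed

lemma (in dominated_prob_space) pair_nn_integral_truncation_le:
  fixes s :: real
  assumes inj: "finite I" "inj_on \<sigma> I" "\<sigma> ` I \<subseteq> K" "finite J" "inj_on \<tau> J" "\<tau> ` J \<subseteq> K"
    and cover: "K \<subseteq> \<sigma> ` I \<union> \<tau> ` J"
    and f[measurable]: "f \<in> borel_measurable (PiM I (\<lambda>_. M))"
    and g[measurable]: "g \<in> borel_measurable (PiM J (\<lambda>_. M))"
    and B[measurable]: "B \<in> sets M" and "0 \<le> C" "0 \<le> \<delta>" "0 \<le> Nf" "0 \<le> Ng"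
    and f_tail: "(\<integral>\<^sup>+x. ennreal ((f x - truncation C B I f x)\<^sup>2) \<partial>PiM I (\<lambda>_. M)) \<le> ennreal (\<delta>\<^sup>2)"
    and g_tail: "(\<integral>\<^sup>+x. ennreal ((g x - truncation C B J g x)\<^sup>2) \<partial>PiM J (\<lambda>_. M)) \<le> ennreal (\<delta>\<^sup>2)"
    and f_norm: "(\<integral>\<^sup>+x. ennreal ((f x)\<^sup>2) \<partial>PiM I (\<lambda>_. M)) \<le> ennreal (Nf\<^sup>2)"
    and g_norm: "(\<integral>\<^sup>+x. ennreal ((g x)\<^sup>2) \<partial>PiM J (\<lambda>_. M)) \<le> ennreal (Ng\<^sup>2)"
  defines "s \<equiv> (card I + card J) / 2"
  shows "ennreal (c powr s) *
      (\<integral>\<^sup>+z. ennreal \<bar>f (reindex \<sigma> I z) * g (reindex \<tau> J z)\<bar> \<partial>PiM K (\<lambda>_. P))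
    \<le> ennreal (c powr (s - card K)) * ennreal (C\<^sup>2) * emeasure M B ^ card K + ennreal (\<delta> * Ng + Nf * \<delta>)"
proof -
  define E where "E \<phi> \<psi> = ennreal (c powr s) *
      (\<integral>\<^sup>+z. ennreal \<bar>\<phi> (reindex \<sigma> I z) * \<psi> (reindex \<tau> J z)\<bar> \<partial>PiM K (\<lambda>_. P))" for \<phi> \<psi>
  define f1 where "f1 = truncation C B I f"
  define g1 where "g1 = truncation C B J g"
  have [measurable]: "f1 \<in> borel_measurable (PiM I (\<lambda>_. M))" "g1 \<in> borel_measurable (PiM J (\<lambda>_. M))"
    using inj by (simp_all add: f1_def g1_def)
  note measurable_reindex_M[OF inj(3), measurable] measurable_reindex_M[OF inj(6), measurable]
  have "(\<integral>\<^sup>+z. ennreal \<bar>f (reindex \<sigma> I z) * g (reindex \<tau> J z)\<bar> \<partial>PiM K (\<lambda>_. P))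
      \<le> (\<integral>\<^sup>+z. ennreal \<bar>f1 (reindex \<sigma> I z) * g1 (reindex \<tau> J z)\<bar>
          + ennreal \<bar>(f (reindex \<sigma> I z) - f1 (reindex \<sigma> I z)) * g (reindex \<tau> J z)\<bar>
          + ennreal \<bar>f1 (reindex \<sigma> I z) * (g (reindex \<tau> J z) - g1 (reindex \<tau> J z))\<bar> \<partial>PiM K (\<lambda>_. P))"
    by (intro nn_integral_mono ennreal_abs_mult_le_truncated)
  also have "\<dots> = (\<integral>\<^sup>+z. ennreal \<bar>f1 (reindex \<sigma> I z) * g1 (reindex \<tau> J z)\<bar> \<partial>PiM K (\<lambda>_. P))
      + (\<integral>\<^sup>+z. ennreal \<bar>(f (reindex \<sigma> I z) - f1 (reindex \<sigma> I z)) * g (reindex \<tau> J z)\<bar> \<partial>PiM K (\<lambda>_. P))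
      + (\<integral>\<^sup>+z. ennreal \<bar>f1 (reindex \<sigma> I z) * (g (reindex \<tau> J z) - g1 (reindex \<tau> J z))\<bar> \<partial>PiM K (\<lambda>_. P))"
    by (simp add: nn_integral_add)
  finally have "E f g \<le> E f1 g1 + E (\<lambda>x. f x - f1 x) g + E f1 (\<lambda>x. g x - g1 x)"
    unfolding E_def distrib_left[symmetric] by (rule mult_left_mono) simp
  also have "E f1 g1 \<le> ennreal (c powr (s - card K)) * ennreal (C\<^sup>2) * emeasure M B ^ card K"
  proof -
    have "finite K"
      using cover inj(1,4) finite_subset by blast
    then have "E f1 g1 \<le> ennreal (c powr s) * (ennreal (C\<^sup>2) * emeasure P B ^ card K)"
      unfolding E_def f1_def g1_def using cover B sets_eq prob_space_axioms \<open>0 \<le> C\<close>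
      by (intro mult_left_mono pair_nn_integral_box_le)
        (auto simp: abs_truncation_le truncation_eq_0)
    also have "\<dots> \<le> ennreal (C\<^sup>2) * (ennreal (c powr (s - card K)) * emeasure M B ^ card K)"
      using mult_left_mono[OF scaled_emeasure_power_le[OF B, of s "card K"], of "ennreal (C\<^sup>2)"]
      by (simp add: mult_ac)
    finally show ?thesis
      by (simp add: mult_ac)
  qed
  also have "E (\<lambda>x. f x - f1 x) g \<le> ennreal (\<delta> * Ng)"
  proof -
    have "(\<lambda>x. f x - f1 x) \<in> borel_measurable (PiM I (\<lambda>_. M))"
      by measurable
    with f_tail show ?thesis
      unfolding E_def s_def f1_def
      by (intro pair_nn_integral_le_mult[OF inj _ g _ \<open>0 \<le> \<delta>\<close> g_norm \<open>0 \<le> Ng\<close>])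
  qed
  also have "E f1 (\<lambda>x. g x - g1 x) \<le> ennreal (Nf * \<delta>)"
  proof -
    have "(\<lambda>x. g x - g1 x) \<in> borel_measurable (PiM J (\<lambda>_. M))"
      by measurable
    moreover have "(\<integral>\<^sup>+x. ennreal ((f1 x)\<^sup>2) \<partial>PiM I (\<lambda>_. M)) \<le> ennreal (Nf\<^sup>2)"
      using abs_truncation_le_abs[of C B I f]
      by (intro order_trans[OF nn_integral_mono f_norm] ennreal_leI)
        (simp add: f1_def abs_le_square_iff)
    ultimately show ?thesis
      using g_tail unfolding E_def s_def g1_def
      by (intro pair_nn_integral_le_mult[OF inj _ _ _ \<open>0 \<le> Nf\<close> _ \<open>0 \<le> \<delta>\<close>]) simp_all
  qed
  finally show ?thesis
    using \<open>0 \<le> \<delta>\<close> \<open>0 \<le> Ng\<close> \<open>0 \<le> Nf\<close> by (simp add: E_def add.assoc ennreal_plus)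
qed

lemma tendsto_scaled_pair_nn_integral:
  fixes M :: "'a measure" and P :: "nat \<Rightarrow> 'a measure" and c :: "nat \<Rightarrow> real"
  assumes dom: "\<And>n. n \<ge> 1 \<Longrightarrow> dominated_prob_space (P n) M (c n)"
    and c_top: "filterlim c at_top sequentially"
    and inj: "finite I" "inj_on \<sigma> I" "\<sigma> ` I \<subseteq> K" "finite J" "inj_on \<tau> J" "\<tau> ` J \<subseteq> K"
    and cover: "K \<subseteq> \<sigma> ` I \<union> \<tau> ` J"
    and K: "card I + card J < 2 * card K"
    and f: "f \<in> borel_measurable (PiM I (\<lambda>_. M))" "integrable (PiM I (\<lambda>_. M)) (\<lambda>x. (f x)\<^sup>2)"
    and g: "g \<in> borel_measurable (PiM J (\<lambda>_. M))" "integrable (PiM J (\<lambda>_. M)) (\<lambda>x. (g x)\<^sup>2)"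
  shows "(\<lambda>n. ennreal (c n powr ((card I + card J) / 2)) *
      (\<integral>\<^sup>+z. ennreal \<bar>f (reindex \<sigma> I z) * g (reindex \<tau> J z)\<bar> \<partial>PiM K (\<lambda>_. P n))) \<longlonglongrightarrow> 0"
proof (rule tendsto_zero_ennreal)
  fix \<epsilon> :: real
  assume "0 < \<epsilon>"
  interpret M: sigma_finite_measure M
    using dom[of 1] by (simp add: dominated_prob_space_def)
  define s where "s = real (card I + card J) / 2"
  define Nf where "Nf = sqrt (\<integral>x. (f x)\<^sup>2 \<partial>PiM I (\<lambda>_. M))"
  define Ng where "Ng = sqrt (\<integral>x. (g x)\<^sup>2 \<partial>PiM J (\<lambda>_. M))"
  have "0 \<le> Nf" "0 \<le> Ng"
    by (simp_all add: Nf_def Ng_def)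
  have f_norm: "(\<integral>\<^sup>+x. ennreal ((f x)\<^sup>2) \<partial>PiM I (\<lambda>_. M)) = ennreal (Nf\<^sup>2)"
    using nn_integral_eq_integral[OF f(2)] by (simp add: Nf_def)
  have g_norm: "(\<integral>\<^sup>+x. ennreal ((g x)\<^sup>2) \<partial>PiM J (\<lambda>_. M)) = ennreal (Ng\<^sup>2)"
    using nn_integral_eq_integral[OF g(2)] by (simp add: Ng_def)
  define \<delta> where "\<delta> = \<epsilon> / (2 * (1 + Nf + Ng))"
  have "0 < \<delta>"
    using \<open>0 < \<epsilon>\<close> \<open>0 \<le> Nf\<close> \<open>0 \<le> Ng\<close> by (simp add: \<delta>_def)
  then obtain C B where CB: "0 \<le> C" "B \<in> sets M" "emeasure M B < \<infinity>"
    and f_tail: "(\<integral>\<^sup>+x. ennreal ((f x - truncation C B I f x)\<^sup>2) \<partial>PiM I (\<lambda>_. M)) < ennreal (\<delta>\<^sup>2)"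
    and g_tail: "(\<integral>\<^sup>+x. ennreal ((g x - truncation C B J g x)\<^sup>2) \<partial>PiM J (\<lambda>_. M)) < ennreal (\<delta>\<^sup>2)"
    using M.small_truncation_remainders[OF inj(1,4) f g, of "\<delta>\<^sup>2"] by auto
  define r where "r n = C\<^sup>2 * measure M B ^ card K * c n powr (s - card K)" for n
  have "s - card K < 0"
    using K by (simp add: s_def)
  then have "r \<longlonglongrightarrow> C\<^sup>2 * measure M B ^ card K * 0"
    unfolding r_def by (intro tendsto_mult tendsto_const tendsto_neg_powr c_top)
  then have "\<forall>\<^sub>F n in sequentially. r n < \<epsilon> / 2"
    using \<open>0 < \<epsilon>\<close> by (intro order_tendstoD(2)) auto
  then show "\<forall>\<^sub>F n in sequentially. ennreal (c n powr ((card I + card J) / 2)) *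
      (\<integral>\<^sup>+z. ennreal \<bar>f (reindex \<sigma> I z) * g (reindex \<tau> J z)\<bar> \<partial>PiM K (\<lambda>_. P n)) < ennreal \<epsilon>"
    using eventually_ge_at_top[of 1]
  proof eventually_elim
    case (elim n)
    interpret n: dominated_prob_space "P n" M "c n"
      using dom elim(2) .
    have "ennreal (c n powr s) *
        (\<integral>\<^sup>+z. ennreal \<bar>f (reindex \<sigma> I z) * g (reindex \<tau> J z)\<bar> \<partial>PiM K (\<lambda>_. P n))
      \<le> ennreal (c n powr (s - card K)) * ennreal (C\<^sup>2) * emeasure M B ^ card K
        + ennreal (\<delta> * Ng + Nf * \<delta>)"
      unfolding s_def using CB \<open>0 < \<delta>\<close> \<open>0 \<le> Nf\<close> \<open>0 \<le> Ng\<close> f_tail g_tail f_norm g_norm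
      by (intro n.pair_nn_integral_truncation_le[OF inj cover f(1) g(1)]) auto
    also have "\<dots> = ennreal (r n + \<delta> * (Nf + Ng))"
    proof -
      have "emeasure M B ^ card K = ennreal (measure M B ^ card K)"
        using CB(3) by (simp add: emeasure_eq_ennreal_measure ennreal_power)
      then show ?thesis
        using \<open>0 < \<delta>\<close> \<open>0 \<le> Nf\<close> \<open>0 \<le> Ng\<close>
        by (simp add: r_def ennreal_mult' ennreal_plus distrib_left mult_ac)
    qed
    also have "\<dots> < ennreal \<epsilon>"
    proof -
      have "\<delta> * (Nf + Ng) \<le> \<epsilon> / 2"
        using \<open>0 < \<epsilon>\<close> \<open>0 \<le> Nf\<close> \<open>0 \<le> Ng\<close> by (simp add: \<delta>_def field_simps)
      with elim(1) \<open>0 < \<epsilon>\<close> show ?thesis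
        by (intro ennreal_lessI) linarith+
    qed
    finally show ?case
      by (simp add: s_def)
  qed
qed

section \<open>Diagrams\<close>

definition rank :: "nat set \<Rightarrow> nat \<Rightarrow> nat" where
  "rank S i = card {m \<in> S. m < i}"

lemma bij_betw_rank:
  assumes "finite S"
  shows "bij_betw (rank S) S {..<card S}"
proof -
  have less: "rank S i < rank S j" if "i \<in> S" "i < j" for i j
    unfolding rank_def using assms that by (intro psubset_card_mono) auto
  have "inj_on (rank S) S"
    by (rule inj_onI) (metis less less_irrefl linorder_neqE_nat)
  moreover have "rank S ` S \<subseteq> {..<card S}"
    unfolding rank_def using assms by (auto intro!: psubset_card_mono)
  ultimately show ?thesis
    unfolding bij_betw_def using assms
    by (metis card_image card_lessThan card_subset_eq finite_lessThan)
qed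

lemma diagramsD:
  assumes "N \<in> diagrams k1 k2 l"
  shows "N \<subseteq> {..<k1} \<times> {k1..<k1+k2}" "card N = l" "inj_on fst N" "inj_on snd N"
  using assms by (auto simp: diagrams_def)

lemma finite_diagrams: "finite (diagrams k1 k2 l)"
  by (rule finite_subset[of _ "Pow ({..<k1} \<times> {k1..<k1+k2})"]) (auto simp: diagrams_def)

lemma rep_mem:
  assumes "N \<in> diagrams k1 k2 l" and "j \<in> snd ` N"
  shows "(rep N j, j) \<in> N"
proof -
  from assms(2) obtain i where i: "(i, j) \<in> N"
    by auto
  have "(THE i. (i, j) \<in> N) = i"
  proof (rule the_equality)
    fix i' assume i': "(i', j) \<in> N"
    show "i' = i"
      using inj_onD[OF diagramsD(4)[OF assms(1)] _ i' i] by simp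
  qed (rule i)
  with i assms(2) show ?thesis
    by (simp add: rep_def)
qed

lemma rep_eq_self: "j \<notin> snd ` N \<Longrightarrow> rep N j = j"
  by (simp add: rep_def)

lemma rep_less:
  assumes "N \<in> diagrams k1 k2 l" and "j \<in> snd ` N"
  shows "rep N j < k1"
  using rep_mem[OF assms] diagramsD(1)[OF assms(1)] by auto

lemma rep_first_block: "N \<in> diagrams k1 k2 l \<Longrightarrow> i < k1 \<Longrightarrow> rep N i = i"
  by (rule rep_eq_self) (use diagramsD(1) in fastforce)

lemma card_kept:
  assumes "N \<in> diagrams k1 k2 l"
  shows "card (kept k1 k2 N) = k1 + k2 - l"
proof -
  note N = diagramsD[OF assms]
  have "snd ` N \<subseteq> {..<k1+k2}"
    using N(1) by auto
  moreover have "card (snd ` N) = l"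
    using card_image[OF N(4)] N(2) by simp
  ultimately show ?thesis
    unfolding kept_def by (simp add: card_Diff_subset finite_subset)
qed

lemma kept_eq_rep_image:
  assumes "N \<in> diagrams k1 k2 l"
  shows "kept k1 k2 N = rep N ` {..<k1} \<union> (\<lambda>i. rep N (k1 + i)) ` {..<k2}"
proof (intro equalityI subsetI)
  fix j assume j: "j \<in> kept k1 k2 N"
  then have "j < k1 + k2" "rep N j = j"
    by (auto simp: kept_def rep_eq_self)
  show "j \<in> rep N ` {..<k1} \<union> (\<lambda>i. rep N (k1 + i)) ` {..<k2}"
  proof (cases "j < k1")
    case True
    with \<open>rep N j = j\<close> show ?thesis
      by (metis UnI1 image_eqI lessThan_iff)
  next
    case False
    with \<open>j < k1 + k2\<close> have "j = k1 + (j - k1)" "j - k1 < k2"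
      by auto
    with \<open>rep N j = j\<close> show ?thesis
      by (metis UnI2 image_eqI lessThan_iff)
  qed
next
  fix j assume j: "j \<in> rep N ` {..<k1} \<union> (\<lambda>i. rep N (k1 + i)) ` {..<k2}"
  have "rep N i \<in> kept k1 k2 N" if "i < k1 + k2" for i
  proof (cases "i \<in> snd ` N")
    case True
    with rep_less[OF assms] diagramsD(1)[OF assms] show ?thesis
      by (fastforce simp: kept_def)
  next
    case False
    with that show ?thesis
      by (simp add: kept_def rep_eq_self)
  qed
  with j show "j \<in> kept k1 k2 N"
    by auto
qed

lemma inj_on_rep_second_block:
  assumes "N \<in> diagrams k1 k2 l"
  shows "inj_on (\<lambda>i. rep N (k1 + i)) {..<k2}"
proof (rule inj_onI)
  fix i i' assume "i \<in> {..<k2}" "i' \<in> {..<k2}" and eq: "rep N (k1 + i) = rep N (k1 + i')"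
  note N = diagramsD[OF assms]
  show "i = i'"
  proof (cases "k1 + i \<in> snd ` N"; cases "k1 + i' \<in> snd ` N")
    assume "k1 + i \<in> snd ` N" "k1 + i' \<in> snd ` N"
    then have "(rep N (k1 + i), k1 + i) = (rep N (k1 + i'), k1 + i')"
      using inj_onD[OF N(3), of "(rep N (k1 + i), k1 + i)" "(rep N (k1 + i'), k1 + i')"]
        rep_mem[OF assms \<open>k1 + i \<in> snd ` N\<close>] rep_mem[OF assms \<open>k1 + i' \<in> snd ` N\<close>] eq
      by simp
    then show ?thesis
      by simp
  next
    assume "k1 + i \<in> snd ` N" "k1 + i' \<notin> snd ` N"
    then show ?thesis
      using rep_less[OF assms, of "k1 + i"] rep_eq_self[of "k1 + i'"] eq by simp
  next
    assume "k1 + i \<notin> snd ` N" "k1 + i' \<in> snd ` N"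
    then show ?thesis
      using rep_less[OF assms, of "k1 + i'"] rep_eq_self[of "k1 + i"] eq by simp
  next
    assume "k1 + i \<notin> snd ` N" "k1 + i' \<notin> snd ` N"
    then show ?thesis
      using rep_eq_self eq by simp
  qed
qed

definition diagram_position :: "nat \<Rightarrow> nat \<Rightarrow> (nat \<times> nat) set \<Rightarrow> nat \<Rightarrow> nat" where
  "diagram_position k1 k2 N i = rank (kept k1 k2 N) (rep N i)"

lemma contraction_tensor:
  "contraction k1 k2 N (tensor k1 k2 f g) z =
     f (reindex (diagram_position k1 k2 N) {..<k1} z) *
     g (reindex (\<lambda>i. diagram_position k1 k2 N (k1 + i)) {..<k2} z)"
  unfolding contraction_def tensor_def reindex_def diagram_position_def rank_def
  by (intro arg_cong2[where f = "(*)"] arg_cong[where f = f] arg_cong[where f = g] ext) auto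

lemma diagram_position_image:
  assumes N: "N \<in> diagrams k1 k2 l"
  shows "diagram_position k1 k2 N ` {..<k1} \<union> (\<lambda>i. diagram_position k1 k2 N (k1 + i)) ` {..<k2}
    = {..<k1 + k2 - l}"
proof -
  define S where "S = kept k1 k2 N"
  have "diagram_position k1 k2 N ` {..<k1} \<union> (\<lambda>i. diagram_position k1 k2 N (k1 + i)) ` {..<k2}
      = rank S ` (rep N ` {..<k1} \<union> (\<lambda>i. rep N (k1 + i)) ` {..<k2})"
    by (simp add: diagram_position_def S_def image_Un image_image)
  also have "\<dots> = rank S ` S"
    using kept_eq_rep_image[OF N] by (simp add: S_def)
  also have "\<dots> = {..<k1 + k2 - l}"
    using bij_betw_rank[of S] card_kept[OF N] by (simp add: S_def kept_def bij_betw_def)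
  finally show ?thesis .
qed

lemma diagram_position_subset:
  assumes "N \<in> diagrams k1 k2 l"
  shows "diagram_position k1 k2 N ` {..<k1} \<subseteq> {..<k1 + k2 - l}"
    and "(\<lambda>i. diagram_position k1 k2 N (k1 + i)) ` {..<k2} \<subseteq> {..<k1 + k2 - l}"
  using diagram_position_image[OF assms] by blast+

lemma inj_on_diagram_position:
  assumes N: "N \<in> diagrams k1 k2 l"
  shows "inj_on (diagram_position k1 k2 N) {..<k1}"
    and "inj_on (\<lambda>i. diagram_position k1 k2 N (k1 + i)) {..<k2}"
proof -
  have inj: "inj_on (rank (kept k1 k2 N)) (kept k1 k2 N)"
    using bij_betw_rank[of "kept k1 k2 N"] by (simp add: kept_def bij_betw_def)
  have first: "rep N ` {..<k1} \<subseteq> kept k1 k2 N" and second: "(\<lambda>i. rep N (k1 + i)) ` {..<k2} \<subseteq> kept k1 k2 N"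
    using kept_eq_rep_image[OF N] by auto
  have "inj_on (rep N) {..<k1}"
    using rep_first_block[OF N] by (simp add: inj_on_def)
  then show "inj_on (diagram_position k1 k2 N) {..<k1}"
    unfolding diagram_position_def[abs_def]
    using comp_inj_on[OF _ inj_on_subset[OF inj first]] by (simp add: comp_def)
  show "inj_on (\<lambda>i. diagram_position k1 k2 N (k1 + i)) {..<k2}"
    using comp_inj_on[OF inj_on_rep_second_block[OF N] inj_on_subset[OF inj second]]
    by (simp add: comp_def diagram_position_def)
qed

lemma measurable_contraction_tensor:
  assumes "N \<in> diagrams k1 k2 l" and "sets P = sets M"
    and "f \<in> borel_measurable (PiM {..<k1} (\<lambda>_. M))" "g \<in> borel_measurable (PiM {..<k2} (\<lambda>_. M))"
  shows "contraction k1 k2 N (tensor k1 k2 f g) \<in> borel_measurable (PiM {..<k1 + k2 - l} (\<lambda>_. P))"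
proof -
  have "reindex (diagram_position k1 k2 N) {..<k1} \<in> measurable (PiM {..<k1 + k2 - l} (\<lambda>_. P)) (PiM {..<k1} (\<lambda>_. M))"
    "reindex (\<lambda>i. diagram_position k1 k2 N (k1 + i)) {..<k2} \<in> measurable (PiM {..<k1 + k2 - l} (\<lambda>_. P)) (PiM {..<k2} (\<lambda>_. M))"
    using measurable_reindex[OF diagram_position_subset(1)[OF assms(1)], of P]
      measurable_reindex[OF diagram_position_subset(2)[OF assms(1)], of P]
    by (simp_all add: measurable_cong_sets[OF refl sets_PiM_const_cong[OF assms(2)]])
  with assms(3,4) show ?thesis
    unfolding contraction_tensor[abs_def] by measurable
qed

lemma ennreal_abs_F_ln_le:
  assumes "sets (P n) = sets M"
    and "f \<in> borel_measurable (PiM {..<k1} (\<lambda>_. M))" "g \<in> borel_measurable (PiM {..<k2} (\<lambda>_. M))"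
  shows "ennreal \<bar>F_ln k1 k2 f g P a l n\<bar> \<le> (\<Sum>N\<in>diagrams k1 k2 l.
      ennreal ((real n / a n) powr (real (k1 + k2) / 2)) *
      (\<integral>\<^sup>+z. ennreal \<bar>contraction k1 k2 N (tensor k1 k2 f g) z\<bar> \<partial>PiM {..<k1 + k2 - l} (\<lambda>_. P n)))"
proof -
  define D where "D = (real n / a n) powr (real (k1 + k2) / 2)"
  define I where "I = (\<integral>z. 1 / real (card (diagrams k1 k2 l)) *
      (\<Sum>N\<in>diagrams k1 k2 l. contraction k1 k2 N (tensor k1 k2 f g) z) \<partial>PiM {..<k1 + k2 - l} (\<lambda>_. P n))"
  have "\<bar>1 / real (card (diagrams k1 k2 l))\<bar> \<le> 1"
    by (cases "card (diagrams k1 k2 l)") auto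
  then have "ennreal \<bar>I\<bar> \<le> (\<Sum>N\<in>diagrams k1 k2 l.
      \<integral>\<^sup>+z. ennreal \<bar>contraction k1 k2 N (tensor k1 k2 f g) z\<bar> \<partial>PiM {..<k1 + k2 - l} (\<lambda>_. P n))"
    unfolding I_def using measurable_contraction_tensor[OF _ assms] finite_diagrams
    by (intro ennreal_abs_integral_sum_le) auto
  moreover have "F_ln k1 k2 f g P a l n = D * I"
    unfolding F_ln_def D_def I_def ..
  ultimately have "ennreal \<bar>F_ln k1 k2 f g P a l n\<bar> \<le> ennreal D * (\<Sum>N\<in>diagrams k1 k2 l.
      \<integral>\<^sup>+z. ennreal \<bar>contraction k1 k2 N (tensor k1 k2 f g) z\<bar> \<partial>PiM {..<k1 + k2 - l} (\<lambda>_. P n))"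
    by (simp add: abs_mult ennreal_mult D_def mult_left_mono)
  then show ?thesis
    by (simp add: sum_distrib_left D_def)
qed

lemma tendsto_scaled_contraction:
  fixes M :: "'a measure" and P :: "nat \<Rightarrow> 'a measure" and c :: "nat \<Rightarrow> real"
  assumes dom: "\<And>n. n \<ge> 1 \<Longrightarrow> dominated_prob_space (P n) M (c n)"
    and c_top: "filterlim c at_top sequentially"
    and N: "N \<in> diagrams k1 k2 l" and "k1 + k2 < 2 * (k1 + k2 - l)"
    and f: "f \<in> borel_measurable (PiM {..<k1} (\<lambda>_. M))" "integrable (PiM {..<k1} (\<lambda>_. M)) (\<lambda>x. (f x)\<^sup>2)"
    and g: "g \<in> borel_measurable (PiM {..<k2} (\<lambda>_. M))" "integrable (PiM {..<k2} (\<lambda>_. M)) (\<lambda>x. (g x)\<^sup>2)"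
  shows "(\<lambda>n. ennreal (c n powr (real (k1 + k2) / 2)) *
      (\<integral>\<^sup>+z. ennreal \<bar>contraction k1 k2 N (tensor k1 k2 f g) z\<bar> \<partial>PiM {..<k1 + k2 - l} (\<lambda>_. P n))) \<longlonglongrightarrow> 0"
  unfolding contraction_tensor
  using tendsto_scaled_pair_nn_integral[OF dom c_top _ _ _ _ _ _ _ _ f g,
      where \<sigma> = "diagram_position k1 k2 N" and \<tau> = "\<lambda>i. diagram_position k1 k2 N (k1 + i)"
        and K = "{..<k1 + k2 - l}"]
    diagram_position_image[OF N] diagram_position_subset[OF N] inj_on_diagram_position[OF N] assms(4)
  by simp

theorem lemma6:
  fixes M :: "'a measure" and a :: "nat \<Rightarrow> real" and P :: "nat \<Rightarrow> 'a measure"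
    and k1 k2 l :: nat and f g :: "(nat \<Rightarrow> 'a) \<Rightarrow> real"
  assumes sf: "sigma_finite_measure M"
    and na: "non_atomic M"
    and inf: "emeasure M (space M) = \<infinity>"
    and a_pos: "\<And>n. n \<ge> 1 \<Longrightarrow> a n > 0"
    and a_inf: "filterlim a at_top sequentially"
    and a_o: "(\<lambda>n. a n / real n) \<longlonglongrightarrow> 0"
    and P_prob: "\<And>n. n \<ge> 1 \<Longrightarrow> prob_space (P n)"
    and P_sets: "\<And>n. n \<ge> 1 \<Longrightarrow> sets (P n) = sets M"
    and mono: "\<And>n B. n \<ge> 1 \<Longrightarrow> B \<in> sets M \<Longrightarrow>
        ennreal (real n / a n) * emeasure (P n) B
          \<le> ennreal (real (Suc n) / a (Suc n)) * emeasure (P (Suc n)) B"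
    and conv: "\<And>B. B \<in> sets M \<Longrightarrow>
        (\<lambda>n. ennreal (real n / a n) * emeasure (P n) B) \<longlonglongrightarrow> emeasure M B"
    and k1: "k1 \<ge> 1" and k2: "k2 \<ge> 1"
    and f_meas: "f \<in> borel_measurable (PiM {..<k1} (\<lambda>_. M))"
    and f_L2: "integrable (PiM {..<k1} (\<lambda>_. M)) (\<lambda>x. (f x)\<^sup>2)"
    and g_meas: "g \<in> borel_measurable (PiM {..<k2} (\<lambda>_. M))"
    and g_L2: "integrable (PiM {..<k2} (\<lambda>_. M)) (\<lambda>x. (g x)\<^sup>2)"
    and cases: "(k1 \<noteq> k2 \<and> l \<le> min k1 k2) \<or> (k1 = k2 \<and> l < k1)"
  shows "(\<lambda>n. F_ln k1 k2 f g P a l n) \<longlonglongrightarrow> 0"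
proof -
  define c where "c n = real n / a n" for n
  define e where "e N n = ennreal (c n powr (real (k1 + k2) / 2)) *
      (\<integral>\<^sup>+z. ennreal \<bar>contraction k1 k2 N (tensor k1 k2 f g) z\<bar> \<partial>PiM {..<k1 + k2 - l} (\<lambda>_. P n))" for N n
  have dom: "dominated_prob_space (P n) M (c n)" if "n \<ge> 1" for n
    unfolding dominated_prob_space_def dominated_prob_space_axioms_def
    using that P_prob P_sets sf a_pos le_of_tendsto_mono_from[OF mono conv]
    by (simp add: c_def)
  have "filterlim (\<lambda>n. inverse (a n / real n)) at_top sequentially"
    using a_pos by (intro filterlim_inverse_at_top[OF a_o] eventually_sequentiallyI[of 1]) simp
  then have c_top: "filterlim c at_top sequentially"
    by (simp add: c_def[abs_def])
  have "k1 + k2 < 2 * (k1 + k2 - l)"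
    using cases by auto
  then have "(\<lambda>n. \<Sum>N\<in>diagrams k1 k2 l. e N n) \<longlonglongrightarrow> (\<Sum>N\<in>diagrams k1 k2 l. 0)"
    unfolding e_def
    by (intro tendsto_sum) (rule tendsto_scaled_contraction[OF dom c_top _ _ f_meas f_L2 g_meas g_L2])
  then have lim: "(\<lambda>n. \<Sum>N\<in>diagrams k1 k2 l. e N n) \<longlonglongrightarrow> 0"
    by simp
  have bound: "\<forall>\<^sub>F n in sequentially. ennreal \<bar>F_ln k1 k2 f g P a l n\<bar> \<le> (\<Sum>N\<in>diagrams k1 k2 l. e N n)"
    using ennreal_abs_F_ln_le[OF P_sets f_meas g_meas]
    by (intro eventually_sequentiallyI[of 1]) (simp add: e_def c_def)
  have "(\<lambda>n. ennreal \<bar>F_ln k1 k2 f g P a l n\<bar>) \<longlonglongrightarrow> 0"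
    by (rule tendsto_sandwich[OF _ bound tendsto_const lim]) simp
  then show ?thesis
    by (simp add: ennreal_tendsto_0_iff tendsto_rabs_zero_iff)
qed

end
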